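(* Let $\mathscr{C}$ be a constant composition $(n,M,\mathcal{X},\epsilon,B,\delta)$-code for the complex AWGN channel with noise variance $\sigma^2$ belonging to the family $\mathsf{C}(C,\boldsymbol{A},\boldsymbol{L},\boldsymbol{\alpha},\boldsymbol{p},\boldsymbol{r})$ described below. Then \[ \epsilon\ge 1-\prod_{c=1}^C\left(1-\exp\!\left(-\frac{r_c^2}{\sigma^2}\right)\right)^{np_c}. \]
   Context: Channel: $f_{\boldsymbol{Y}|\boldsymbol{X}}(\boldsymbol{y}|\boldsymbol{\nu})=\prod_{m=1}^n \frac{1}{\pi\sigma^2}\exp(-|y_m-\nu_m|^2/\sigma^2)$. An $(n,M,\mathcal{X})$-code is $\{(\boldsymbol{u}(i),\mathcal{D}_i)\}_{i=1}^M$ with $\boldsymbol{u}(i)\in\mathcal{X}^n$ and pairwise disjoint $\mathcal{D}_i\subseteq\mathbb{C}^n$; $\gamma(\mathscr{C})=\frac1M\sum_i\big(1-\int_{\mathcal{D}_i}f_{\boldsymbol{Y}|\boldsymbol{X}}(\boldsymbol{y}|\boldsymbol{u}(i))\mathrm{d}\boldsymbol{y}\big)$; $e_i=k_1\sum_m|u_m(i)|^2+k_2\sum_m|u_m(i)|^4$ with positive constants $k_1,k_2$; $\theta(\mathscr{C},B)=\frac1M\sum_i\mathbb{1}_{\{e_i<B\}}$; an $(n,M,\mathcal{X},\epsilon,B,\delta)$-code is one with $\gamma(\mathscr{C})\le\epsilon$, $\theta(\mathscr{C},B)\le\delta$. Types: $P_{\boldsymbol{u}(i)}(x)=\frac1n\sum_m\mathbb{1}_{\{u_m(i)=x\}}$,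 $P_{\mathscr{C}}=\frac1M\sum_iP_{\boldsymbol{u}(i)}$; constant composition means $P_{\boldsymbol{u}(i)}=P_{\mathscr{C}}$ for all $i$. Family $\mathsf{C}(C,\boldsymbol{A},\boldsymbol{L},\boldsymbol{\alpha},\boldsymbol{p},\boldsymbol{r})$: amplitudes $A_1>\dots>A_C>0$; $L_c\in\mathbb{N}$; phases $\alpha_c$; layer $c$ is $\{x_c^{(1)},\dots,x_c^{(L_c)}\}=\{A_c\exp(\mathrm{i}(2\pi\ell/L_c+\alpha_c)):\ell=0,\dots,L_c-1\}$; $\mathcal{X}$ is the union of the layers. Codewords are pairwise distinct with $P_{\mathscr{C}}(x_c^{(\ell)})=p_c/L_c$ for a probability vector $\boldsymbol{p}=(p_1,\dots,p_C)$. With radii $r_c>0$ and discs $\mathcal{G}_c^{(\ell)}=\{y:|y-x_c^{(\ell)}|\le r_c\}$, $\mathcal{D}_i=\prod_m\mathcal{D}_{i,m}$ with $\mathcal{D}_{i,m}=\mathcal{G}_c^{(\ell)}$ if $u_m(i)=x_c^{(\ell)}$; and $A_c-A_{c+1}\ge r_c+r_{c+1}$ for $c<C$. *)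

theory Defs
  imports "HOL-Analysis.Analysis"
begin

text \<open>Block length n is CARD('n); received/transmitted blocks live in complex^'n.
  Codewords and decoding regions are indexed by i in {1..M}.\<close>

definition awgn_density :: "real \<Rightarrow> complex^'n \<Rightarrow> complex^'n \<Rightarrow> real" where
  "awgn_density \<sigma> \<nu> y =
     (\<Prod>m\<in>UNIV. 1 / (pi * \<sigma>\<^sup>2) * exp (- (cmod (y$m - \<nu>$m))\<^sup>2 / \<sigma>\<^sup>2))"

definition avg_error ::
  "real \<Rightarrow> nat \<Rightarrow> (nat \<Rightarrow> complex^'n) \<Rightarrow> (nat \<Rightarrow> (complex^'n) set) \<Rightarrow> real" where
  "avg_error \<sigma> M u D =
     (1 / real M) * (\<Sum>i=1..M. 1 - (LINT y:D i|lborel. awgn_density \<sigma> (u i) y))"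

definition energy :: "real \<Rightarrow> real \<Rightarrow> complex^'n \<Rightarrow> real" where
  "energy k1 k2 v = k1 * (\<Sum>m\<in>UNIV. (cmod (v$m))^2) + k2 * (\<Sum>m\<in>UNIV. (cmod (v$m))^4)"

definition theta :: "real \<Rightarrow> real \<Rightarrow> real \<Rightarrow> nat \<Rightarrow> (nat \<Rightarrow> complex^'n) \<Rightarrow> real" where
  "theta k1 k2 B M u = (1 / real M) * real (card {i\<in>{1..M}. energy k1 k2 (u i) < B})"

definition is_code :: "nat \<Rightarrow> complex set \<Rightarrow> (nat \<Rightarrow> complex^'n) \<Rightarrow> (nat \<Rightarrow> (complex^'n) set) \<Rightarrow> bool" where
  "is_code M X u D \<longleftrightarrow>
     (\<forall>i\<in>{1..M}. \<forall>m. u i $ m \<in> X) \<and>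
     (\<forall>i\<in>{1..M}. \<forall>j\<in>{1..M}. i \<noteq> j \<longrightarrow> D i \<inter> D j = {})"

definition type_of_word :: "complex^'n \<Rightarrow> complex \<Rightarrow> real" where
  "type_of_word v x = (1 / real CARD('n)) * real (card {m. v$m = x})"

definition code_type :: "nat \<Rightarrow> (nat \<Rightarrow> complex^'n) \<Rightarrow> complex \<Rightarrow> real" where
  "code_type M u x = (1 / real M) * (\<Sum>i=1..M. type_of_word (u i) x)"

definition constant_composition :: "nat \<Rightarrow> (nat \<Rightarrow> complex^'n) \<Rightarrow> bool" where
  "constant_composition M u \<longleftrightarrow> (\<forall>i\<in>{1..M}. \<forall>x. type_of_word (u i) x = code_type M u x)"

text \<open>Constellation point x_c^(l+1) = A_c exp(i(2 pi l / L_c + alpha_c)), l = 0..L_c-1.\<close>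
definition cpoint :: "(nat \<Rightarrow> real) \<Rightarrow> (nat \<Rightarrow> nat) \<Rightarrow> (nat \<Rightarrow> real) \<Rightarrow> nat \<Rightarrow> nat \<Rightarrow> complex" where
  "cpoint A L \<alpha> c l = complex_of_real (A c) * exp (\<i> * complex_of_real (2 * pi * real l / real (L c) + \<alpha> c))"

definition constellation :: "nat \<Rightarrow> (nat \<Rightarrow> real) \<Rightarrow> (nat \<Rightarrow> nat) \<Rightarrow> (nat \<Rightarrow> real) \<Rightarrow> complex set" where
  "constellation C A L \<alpha> = (\<Union>c\<in>{1..C}. {cpoint A L \<alpha> c l | l. l < L c})"

definition disc_region ::
  "nat \<Rightarrow> (nat \<Rightarrow> real) \<Rightarrow> (nat \<Rightarrow> nat) \<Rightarrow> (nat \<Rightarrow> real) \<Rightarrow> (nat \<Rightarrow> real) \<Rightarrow> complex^'n \<Rightarrow> (complex^'n) set" where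
  "disc_region C A L \<alpha> r v =
     {y. \<forall>m. \<exists>c\<in>{1..C}. \<exists>l<L c. v$m = cpoint A L \<alpha> c l \<and> cmod (y$m - v$m) \<le> r c}"

definition in_family ::
  "nat \<Rightarrow> (nat \<Rightarrow> real) \<Rightarrow> (nat \<Rightarrow> nat) \<Rightarrow> (nat \<Rightarrow> real) \<Rightarrow> (nat \<Rightarrow> real) \<Rightarrow> (nat \<Rightarrow> real)
   \<Rightarrow> nat \<Rightarrow> (nat \<Rightarrow> complex^'n) \<Rightarrow> (nat \<Rightarrow> (complex^'n) set) \<Rightarrow> bool" where
  "in_family C A L \<alpha> p r M u D \<longleftrightarrow>
     C \<ge> 1 \<and>
     (\<forall>c\<in>{1..<C}. A c > A (Suc c)) \<and> A C > 0 \<and>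
     (\<forall>c\<in>{1..C}. L c \<ge> 1) \<and>
     (\<forall>c\<in>{1..C}. p c \<ge> 0) \<and> (\<Sum>c=1..C. p c) = 1 \<and>
     (\<forall>c\<in>{1..C}. r c > 0) \<and>
     (\<forall>c\<in>{1..<C}. A c - A (Suc c) \<ge> r c + r (Suc c)) \<and>
     (\<forall>i\<in>{1..M}. \<forall>j\<in>{1..M}. i \<noteq> j \<longrightarrow> u i \<noteq> u j) \<and>
     (\<forall>c\<in>{1..C}. \<forall>l<L c. code_type M u (cpoint A L \<alpha> c l) = p c / real (L c)) \<and>
     (\<forall>i\<in>{1..M}. D i = disc_region C A L \<alpha> r (u i))"

end

theory Submission
  imports Defs
begin

(* Every decoding region is a product of discs, one per coordinate, centred at the transmitted
   symbol with the radius of its layer, so under the product Gaussian density the probability of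
   correct decoding factorises over the coordinates.  A disc of radius rho around the mean of a
   circular complex Gaussian of variance sigma^2 has probability 1 - exp (- rho^2 / sigma^2).
   By constant composition every codeword has exactly n p_c symbols in layer c, so all codewords
   are decoded correctly with the same probability prod_c (1 - exp (- r_c^2 / sigma^2))^(n p_c),
   and the average error probability is one minus this product. *)

lemma prod_Basis_vec:
  "(\<Prod>b\<in>(Basis::('a::euclidean_space^'n) set). f b) = (\<Prod>i\<in>UNIV. \<Prod>b\<in>Basis. f (axis i b))"
proof -
  have inj: "inj_on (\<lambda>(i, b). axis i b) (UNIV \<times> (Basis :: 'a set))"
    by (auto simp: inj_on_def axis_eq_axis nonzero_Basis)
  have "(Basis :: ('a^'n) set) = (\<lambda>(i, b). axis i b) ` (UNIV \<times> Basis)"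
    by (auto simp: Basis_vec_def)
  then have "(\<Prod>b\<in>(Basis::('a^'n) set). f b) = (\<Prod>(i, b)\<in>UNIV \<times> Basis. f (axis i b))"
    by (rule prod.reindex_cong[OF inj]) auto
  then show ?thesis by (simp add: prod.cartesian_product)
qed

lemma mem_box_vec:
  fixes l u x :: "'a::euclidean_space^'n"
  shows "x \<in> box l u \<longleftrightarrow> (\<forall>i. x$i \<in> box (l$i) (u$i))"
  by (auto simp: mem_box Basis_vec_def inner_axis)

lemma vec_lambda_measurable:
  "vec_lambda \<in> borel_measurable (PiM UNIV (\<lambda>_::'n::finite. (lborel :: 'a::euclidean_space measure)))"
proof (subst borel_measurable_euclidean_space, intro ballI)
  fix j :: "'a^'n" assume "j \<in> Basis"
  then obtain i b where "j = axis i b" by (auto simp: Basis_vec_def)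
  then have "(\<lambda>x. vec_lambda x \<bullet> j) = (\<lambda>x. x i \<bullet> b)" by (simp add: inner_axis)
  then show "(\<lambda>x. vec_lambda x \<bullet> j) \<in> borel_measurable (PiM UNIV (\<lambda>_. lborel))" by simp
qed

lemma vec_nth_measurable [measurable]: "(\<lambda>y::'a::euclidean_space^'n. y$m) \<in> borel_measurable borel"
  by (intro borel_measurable_continuous_onI continuous_intros)

lemma lborel_vec_eq_distr_PiM:
  "(lborel :: ('a::euclidean_space ^ 'n::finite) measure) = distr (PiM UNIV (\<lambda>_. lborel)) borel vec_lambda"
proof (rule lborel_eqI)
  interpret P: product_sigma_finite "\<lambda>_::'n. (lborel :: 'a measure)"
    by (simp add: product_sigma_finite_def sigma_finite_lborel)
  fix l u :: "'a^'n" assume le: "\<And>b. b \<in> Basis \<Longrightarrow> l \<bullet> b \<le> u \<bullet> b"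
  have le': "l$i \<bullet> b \<le> u$i \<bullet> b" if "b \<in> Basis" for i b
    using le[of "axis i b"] that by (auto simp: Basis_vec_def inner_axis)
  have "vec_lambda -` box l u \<inter> space (PiM UNIV (\<lambda>_. lborel)) = PiE UNIV (\<lambda>i. box (l$i) (u$i))"
    by (auto simp: mem_box_vec space_PiM PiE_def Pi_def extensional_def)
  then have "emeasure (distr (PiM UNIV (\<lambda>_. lborel)) borel vec_lambda) (box l u)
      = emeasure (PiM UNIV (\<lambda>_. lborel)) (PiE UNIV (\<lambda>i. box (l$i) (u$i)))"
    by (simp add: emeasure_distr[OF vec_lambda_measurable])
  also have "\<dots> = (\<Prod>i\<in>UNIV. emeasure lborel (box (l$i) (u$i)))"
    by (rule P.emeasure_PiM) auto
  also have "\<dots> = (\<Prod>i\<in>UNIV. ennreal (\<Prod>b\<in>Basis. (u$i - l$i) \<bullet> b))"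
    using le' by (intro prod.cong refl emeasure_lborel_box) auto
  also have "\<dots> = ennreal (\<Prod>i\<in>UNIV. \<Prod>b\<in>Basis. (u$i - l$i) \<bullet> b)"
    using le' by (intro prod_ennreal prod_nonneg) (auto simp: inner_diff_left)
  also have "(\<Prod>i\<in>UNIV. \<Prod>b\<in>Basis. (u$i - l$i) \<bullet> b) = (\<Prod>b\<in>Basis. (u - l) \<bullet> b)"
    by (simp add: prod_Basis_vec inner_axis)
  finally show "emeasure (distr (PiM UNIV (\<lambda>_. lborel)) borel vec_lambda) (box l u)
      = (\<Prod>b\<in>Basis. (u - l) \<bullet> b)" .
qed simp

lemma nn_integral_lborel_vec_prod:
  fixes g :: "'n::finite \<Rightarrow> 'a::euclidean_space \<Rightarrow> ennreal"
  assumes [measurable]: "\<And>m. g m \<in> borel_measurable borel"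
  shows "(\<integral>\<^sup>+y. (\<Prod>m\<in>UNIV. g m (y$m)) \<partial>lborel) = (\<Prod>m\<in>UNIV. \<integral>\<^sup>+z. g m z \<partial>lborel)"
proof -
  interpret P: product_sigma_finite "\<lambda>_::'n. (lborel :: 'a measure)"
    by (simp add: product_sigma_finite_def sigma_finite_lborel)
  have "(\<integral>\<^sup>+y. (\<Prod>m\<in>UNIV. g m (y$m)) \<partial>lborel)
      = (\<integral>\<^sup>+x. (\<Prod>m\<in>UNIV. g m (x m)) \<partial>PiM UNIV (\<lambda>_. lborel))"
    by (subst lborel_vec_eq_distr_PiM) (simp add: nn_integral_distr[OF vec_lambda_measurable])
  also have "\<dots> = (\<Prod>m\<in>UNIV. \<integral>\<^sup>+z. g m z \<partial>lborel)"
    by (subst P.product_nn_integral_prod) auto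
  finally show ?thesis .
qed

lemma enn2real_prod: "enn2real (\<Prod>i\<in>I. f i) = (\<Prod>i\<in>I. enn2real (f i))"
  by (induction I rule: infinite_finite_induct) (simp_all add: enn2real_mult)

lemma integral_lborel_vec_prod:
  fixes g :: "'n::finite \<Rightarrow> 'a::euclidean_space \<Rightarrow> real"
  assumes [measurable]: "\<And>m. g m \<in> borel_measurable borel" and nonneg: "\<And>m z. g m z \<ge> 0"
  shows "(LINT y|lborel. (\<Prod>m\<in>UNIV. g m (y$m))) = (\<Prod>m\<in>UNIV. LINT z|lborel. g m z)"
proof -
  have "(LINT y|lborel. (\<Prod>m\<in>UNIV. g m (y$m))) = enn2real (\<integral>\<^sup>+y. (\<Prod>m\<in>UNIV. ennreal (g m (y$m))) \<partial>lborel)"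
    using nonneg by (simp add: integral_eq_nn_integral prod_nonneg prod_ennreal)
  also have "\<dots> = (\<Prod>m\<in>UNIV. LINT z|lborel. g m z)"
    using nonneg by (simp add: nn_integral_lborel_vec_prod[where g="\<lambda>m z. ennreal (g m z)"]
        enn2real_prod integral_eq_nn_integral)
  finally show ?thesis .
qed

lemma nn_integral_radial_fubini:
  fixes v :: complex and f :: "real \<Rightarrow> real"
  assumes [measurable]: "f \<in> borel_measurable borel" and f_nonneg: "\<And>t. f t \<ge> 0"
  shows "(\<integral>\<^sup>+z. \<integral>\<^sup>+t. ennreal (f t) * indicator {(cmod (z - v))\<^sup>2..a} t \<partial>lborel \<partial>lborel)
       = (\<integral>\<^sup>+t. ennreal (f t * (pi * t)) * indicator {0..a} t \<partial>lborel)"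
proof -
  define S where "S = {(z, t). (cmod (z - v))\<^sup>2 \<le> t \<and> t \<le> a}"
  have "closed S" unfolding S_def case_prod_beta
    by (intro closed_Collect_conj closed_Collect_le continuous_intros)
  then have [measurable]: "S \<in> sets (lborel \<Otimes>\<^sub>M lborel)"
    unfolding lborel_prod by (simp add: borel_closed)
  have slice: "(\<integral>\<^sup>+z. ennreal (f t) * indicator S (z, t) \<partial>lborel)
      = ennreal (f t * (pi * t)) * indicator {0..a} t" for t
  proof (cases "t \<in> {0..a}")
    case True
    have sqrt_iff: "w \<le> sqrt t \<longleftrightarrow> w\<^sup>2 \<le> t" if "w \<ge> 0" for w
      using that by (metis abs_of_nonneg real_sqrt_abs real_sqrt_le_iff)
    have "{z. (z, t) \<in> S} = cball v (sqrt t)"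
      using True by (auto simp: S_def dist_norm norm_minus_commute sqrt_iff)
    then have "(\<integral>\<^sup>+z. ennreal (f t) * indicator S (z, t) \<partial>lborel)
        = (\<integral>\<^sup>+z. ennreal (f t) * indicator (cball v (sqrt t)) z \<partial>lborel)"
      by (intro nn_integral_cong) (auto simp: indicator_def)
    also have "\<dots> = f t * emeasure lborel (cball v (sqrt t))"
      by (simp add: nn_integral_cmult_indicator)
    also have "emeasure lborel (cball v (sqrt t)) = ennreal (pi * t)"
      using True by (simp add: emeasure_cball unit_ball_vol_2)
    finally show ?thesis using True f_nonneg by (simp add: ennreal_mult)
  next
    case False
    have "(z, t) \<notin> S" for z
      using False by (auto simp: S_def intro: order.trans[OF zero_le_power2])
    then show ?thesis using False by simp
  qed
  have "(\<integral>\<^sup>+z. \<integral>\<^sup>+t. ennreal (f t) * indicator {(cmod (z - v))\<^sup>2..a} t \<partial>lborel \<partial>lborel)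
      = (\<integral>\<^sup>+z. \<integral>\<^sup>+t. ennreal (f t) * indicator S (z, t) \<partial>lborel \<partial>lborel)"
    by (simp add: S_def indicator_def)
  also have "\<dots> = (\<integral>\<^sup>+t. \<integral>\<^sup>+z. ennreal (f t) * indicator S (z, t) \<partial>lborel \<partial>lborel)"
    by (rule lborel_pair.Fubini') measurable
  also have "\<dots> = (\<integral>\<^sup>+t. ennreal (f t * (pi * t)) * indicator {0..a} t \<partial>lborel)"
    by (simp only: slice)
  finally show ?thesis .
qed

lemma nn_integral_exp_tail:
  fixes s x a :: real
  assumes "s > 0"
  shows "(\<integral>\<^sup>+t. ennreal (exp (- t / s) / s) * indicator {x..a} t \<partial>lborel)
       = ennreal (exp (- x / s) - exp (- a / s))"
proof (cases "x \<le> a")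
  case True
  have "((\<lambda>t. - exp (- t / s)) has_real_derivative exp (- t / s) / s) (at t)" for t
    using assms by (auto intro!: derivative_eq_intros simp: field_simps)
  with True assms show ?thesis by (subst nn_integral_FTC_Icc) auto
next
  case False
  (* both sides vanish, the right one because ennreal truncates negative values *)
  with assms show ?thesis by (simp add: ennreal_neg divide_le_cancel)
qed

lemma nn_integral_exp_times_linear:
  fixes s a :: real
  assumes "s > 0" and "a \<ge> 0"
  shows "(\<integral>\<^sup>+t. ennreal (exp (- t / s) / s * (pi * t)) * indicator {0..a} t \<partial>lborel)
       = ennreal (pi * (s - (a + s) * exp (- a / s)))"
proof -
  define G where "G t = - pi * (t + s) * exp (- t / s)" for t
  have "(G has_real_derivative exp (- t / s) / s * (pi * t)) (at t)" for t
    unfolding G_def using assms(1) by (auto intro!: derivative_eq_intros simp: field_simps)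
  then have "(\<integral>\<^sup>+t. ennreal (exp (- t / s) / s * (pi * t)) * indicator {0..a} t \<partial>lborel) = ennreal (G a - G 0)"
    using assms by (intro nn_integral_FTC_Icc) auto
  then show ?thesis by (simp add: G_def algebra_simps)
qed

lemma nn_integral_gaussian_disc:
  fixes v :: complex and \<rho> s :: real
  assumes "\<rho> \<ge> 0" and "s > 0"
  shows "(\<integral>\<^sup>+z. ennreal (indicator (cball v \<rho>) z * (1 / (pi * s) * exp (- (cmod (z - v))\<^sup>2 / s))) \<partial>lborel)
         = ennreal (1 - exp (- \<rho>\<^sup>2 / s))"
proof -
  define a where "a = \<rho>\<^sup>2"
  have a_nonneg: "a \<ge> 0" by (simp add: a_def)
  have [measurable]: "cball v \<rho> \<in> sets borel" by simp
  have exp_le_iff: "exp (- a / s) \<le> exp (- (cmod (z - v))\<^sup>2 / s) \<longleftrightarrow> z \<in> cball v \<rho>" for z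
    using assms by (auto simp: a_def divide_le_cancel dist_norm norm_minus_commute power_mono
        intro: power2_le_imp_le)
  (* on the disc, split the density into its value on the boundary circle plus the excess *)
  have integrand: "ennreal (indicator (cball v \<rho>) z * (1 / (pi * s) * exp (- (cmod (z - v))\<^sup>2 / s)))
      = ennreal (1 / (pi * s)) * (ennreal (exp (- a / s)) * indicator (cball v \<rho>) z
          + ennreal (exp (- (cmod (z - v))\<^sup>2 / s) - exp (- a / s)))" for z
  proof (cases "z \<in> cball v \<rho>")
    case True
    then have "ennreal (exp (- a / s)) + ennreal (exp (- (cmod (z - v))\<^sup>2 / s) - exp (- a / s))
        = ennreal (exp (- (cmod (z - v))\<^sup>2 / s))"
      using exp_le_iff by (simp flip: ennreal_plus)
    with True \<open>s > 0\<close> show ?thesis by (simp add: ennreal_mult[symmetric])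
  next
    case False
    then have "exp (- (cmod (z - v))\<^sup>2 / s) - exp (- a / s) \<le> 0" using exp_le_iff by force
    with False show ?thesis by (simp add: ennreal_neg)
  qed
  have "(1 + a / s) * exp (- a / s) \<le> 1"
    using exp_ge_add_one_self[of "a / s"] by (simp add: exp_minus field_simps)
  then have "(a + s) * exp (- a / s) \<le> s"
    using assms by (simp add: field_simps)
  then have excess_nonneg: "0 \<le> pi * (s - (a + s) * exp (- a / s))"
    by simp
  have "(\<integral>\<^sup>+z. ennreal (indicator (cball v \<rho>) z * (1 / (pi * s) * exp (- (cmod (z - v))\<^sup>2 / s))) \<partial>lborel)
      = ennreal (1 / (pi * s)) * (\<integral>\<^sup>+z. ennreal (exp (- a / s)) * indicator (cball v \<rho>) z
          + ennreal (exp (- (cmod (z - v))\<^sup>2 / s) - exp (- a / s)) \<partial>lborel)"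
    unfolding integrand by (rule nn_integral_cmult) measurable
  also have "\<dots> = ennreal (1 / (pi * s)) * (ennreal (exp (- a / s)) * emeasure lborel (cball v \<rho>)
          + (\<integral>\<^sup>+z. ennreal (exp (- (cmod (z - v))\<^sup>2 / s) - exp (- a / s)) \<partial>lborel))"
    by (subst nn_integral_add) (auto simp: nn_integral_cmult_indicator)
  also have "(\<integral>\<^sup>+z. ennreal (exp (- (cmod (z - v))\<^sup>2 / s) - exp (- a / s)) \<partial>lborel)
      = (\<integral>\<^sup>+t. ennreal (exp (- t / s) / s * (pi * t)) * indicator {0..a} t \<partial>lborel)"
    using assms(2)
    by (simp only: nn_integral_exp_tail[symmetric]) (rule nn_integral_radial_fubini; simp)
  also have "\<dots> = ennreal (pi * (s - (a + s) * exp (- a / s)))"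
    using assms(2) a_nonneg by (rule nn_integral_exp_times_linear)
  also have "emeasure lborel (cball v \<rho>) = ennreal (pi * a)"
    using assms(1) by (simp add: emeasure_cball unit_ball_vol_2 a_def)
  also have "ennreal (1 / (pi * s)) * (ennreal (exp (- a / s)) * ennreal (pi * a)
        + ennreal (pi * (s - (a + s) * exp (- a / s))))
      = ennreal (1 / (pi * s) * (exp (- a / s) * (pi * a) + pi * (s - (a + s) * exp (- a / s))))"
    using assms(2) a_nonneg excess_nonneg
    by (simp only: ennreal_mult[symmetric] ennreal_plus[symmetric] exp_ge_zero pi_ge_zero
        mult_nonneg_nonneg add_nonneg_nonneg divide_nonneg_nonneg zero_le_one less_imp_le)
  also have "1 / (pi * s) * (exp (- a / s) * (pi * a) + pi * (s - (a + s) * exp (- a / s)))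
      = 1 - exp (- \<rho>\<^sup>2 / s)"
    using assms(2) by (simp add: a_def field_simps)
  finally show ?thesis .
qed

lemma integral_awgn_density_cballs:
  fixes v :: "complex^'n" and \<rho> :: "'n \<Rightarrow> real"
  assumes "\<sigma> > 0" and "\<And>m. \<rho> m \<ge> 0"
  shows "(LINT y:{y. \<forall>m. y$m \<in> cball (v$m) (\<rho> m)}|lborel. awgn_density \<sigma> v y)
       = (\<Prod>m\<in>UNIV. 1 - exp (- (\<rho> m)\<^sup>2 / \<sigma>\<^sup>2))"
proof -
  define g where
    "g m z = indicator (cball (v$m) (\<rho> m)) z * (1 / (pi * \<sigma>\<^sup>2) * exp (- (cmod (z - v$m))\<^sup>2 / \<sigma>\<^sup>2))"
    for m z
  have g_nonneg: "g m z \<ge> 0" for m z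
    by (simp add: g_def)
  have g_measurable: "g m \<in> borel_measurable borel" for m
    unfolding g_def using \<open>\<sigma> > 0\<close>
    by (intro borel_measurable_times borel_measurable_indicator borel_closed closed_cball
        borel_measurable_continuous_onI continuous_intros) auto
  have indicator_cballs: "indicator {y. \<forall>m. y$m \<in> cball (v$m) (\<rho> m)} y
      = (\<Prod>m\<in>UNIV. indicator (cball (v$m) (\<rho> m)) (y$m) :: real)" for y
    by (auto simp: indicator_def)
  have factor: "(LINT z|lborel. g m z) = 1 - exp (- (\<rho> m)\<^sup>2 / \<sigma>\<^sup>2)" for m
  proof -
    have "(LINT z|lborel. g m z) = enn2real (\<integral>\<^sup>+z. ennreal (g m z) \<partial>lborel)"
      using g_measurable g_nonneg by (intro integral_eq_nn_integral) auto
    also have "\<dots> = 1 - exp (- (\<rho> m)\<^sup>2 / \<sigma>\<^sup>2)"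
      using assms by (simp only: g_def nn_integral_gaussian_disc zero_less_power2) simp
    finally show ?thesis .
  qed
  have "(LINT y:{y. \<forall>m. y$m \<in> cball (v$m) (\<rho> m)}|lborel. awgn_density \<sigma> v y)
      = (LINT y|lborel. (\<Prod>m\<in>UNIV. g m (y$m)))"
    unfolding set_lebesgue_integral_def indicator_cballs awgn_density_def g_def real_scaleR_def
      prod.distrib[symmetric] ..
  also have "\<dots> = (\<Prod>m\<in>UNIV. LINT z|lborel. g m z)"
    using g_measurable g_nonneg by (rule integral_lborel_vec_prod)
  also have "\<dots> = (\<Prod>m\<in>UNIV. 1 - exp (- (\<rho> m)\<^sup>2 / \<sigma>\<^sup>2))"
    by (simp only: factor)
  finally show ?thesis .
qed

definition constellation_layer :: "(nat \<Rightarrow> real) \<Rightarrow> (nat \<Rightarrow> nat) \<Rightarrow> (nat \<Rightarrow> real) \<Rightarrow> nat \<Rightarrow> complex set"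
  where "constellation_layer A L \<alpha> c = cpoint A L \<alpha> c ` {..<L c}"

lemma constellation_eq_UN_layers:
  "constellation C A L \<alpha> = (\<Union>c\<in>{1..C}. constellation_layer A L \<alpha> c)"
  by (auto simp: constellation_def constellation_layer_def)

lemma norm_cpoint: "cmod (cpoint A L \<alpha> c l) = \<bar>A c\<bar>"
  by (simp add: cpoint_def norm_mult)

lemma inj_on_cpoint:
  assumes "A c \<noteq> 0"
  shows "inj_on (cpoint A L \<alpha> c) {..<L c}"
proof (rule inj_onI)
  fix l l' assume l: "l \<in> {..<L c}" "l' \<in> {..<L c}" and eq: "cpoint A L \<alpha> c l = cpoint A L \<alpha> c l'"
  then have L_pos: "real (L c) > 0" by simp
  have "exp (\<i> * of_real (2 * pi * real l / real (L c) + \<alpha> c))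
      = exp (\<i> * of_real (2 * pi * real l' / real (L c) + \<alpha> c))"
    using eq assms by (simp add: cpoint_def)
  then obtain k :: int where "\<i> * of_real (2 * pi * real l / real (L c) + \<alpha> c)
      = \<i> * of_real (2 * pi * real l' / real (L c) + \<alpha> c) + of_int (2 * k) * pi * \<i>"
    by (auto simp: exp_eq)
  then have "2 * pi * real l / real (L c) = 2 * pi * real l' / real (L c) + 2 * k * pi"
    by (simp add: complex_eq_iff)
  then have "2 * pi * real l = 2 * pi * (real l' + real_of_int k * real (L c))"
    using L_pos by (simp add: field_simps)
  then have "real_of_int (int l - int l') = real_of_int (k * int (L c))"
    by simp
  then have "int l - int l' = k * int (L c)"
    by (simp only: of_int_eq_iff)
  then have "int (L c) dvd int l - int l'" by simp
  moreover have "\<bar>int l - int l'\<bar> < int (L c)" using l by auto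
  ultimately have "int l - int l' = 0"
    using dvd_imp_le_int[of "int l - int l'" "int (L c)"] by (cases "int l - int l' = 0") auto
  then show "l = l'" by simp
qed

lemma constellation_layers_disjoint:
  assumes "inj_on (\<lambda>c. \<bar>A c\<bar>) I" "c \<in> I" "c' \<in> I"
    and "x \<in> constellation_layer A L \<alpha> c" "x \<in> constellation_layer A L \<alpha> c'"
  shows "c = c'"
proof -
  obtain l l' where "x = cpoint A L \<alpha> c l" "x = cpoint A L \<alpha> c' l'"
    using assms(4,5) unfolding constellation_layer_def by blast
  then have "\<bar>A c\<bar> = \<bar>A c'\<bar>" by (metis norm_cpoint)
  from inj_onD[OF assms(1) this assms(2,3)] show ?thesis .
qed

lemma decreasing_amplitudes_less:
  fixes A :: "nat \<Rightarrow> real"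
  assumes "\<forall>c\<in>{1..<C}. A (Suc c) < A c" and "1 \<le> c" "c < c'" "c' \<le> C"
  shows "A c' < A c"
proof -
  have "Suc c \<le> c'" using \<open>c < c'\<close> by simp
  then show ?thesis using \<open>c' \<le> C\<close>
  proof (induction c' rule: dec_induct)
    case base
    then show ?case using assms(1,2) by simp
  next
    case (step n)
    then have "A n < A c" and "A (Suc n) < A n" using assms(1,2) by simp_all
    then show ?case by simp
  qed
qed

lemma in_family_amplitude_pos:
  assumes "in_family C A L \<alpha> p r M u D" "c \<in> {1..C}"
  shows "A c > 0"
proof -
  have decreasing: "\<forall>c\<in>{1..<C}. A (Suc c) < A c" and "A C > 0"
    using assms(1) by (simp_all add: in_family_def)
  show ?thesis
  proof (cases "c = C")
    case False
    then have "A C < A c"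
      using assms(2) by (intro decreasing_amplitudes_less[OF decreasing]) simp_all
    with \<open>A C > 0\<close> show ?thesis by simp
  qed (use \<open>A C > 0\<close> in simp)
qed

lemma in_family_inj_amplitude:
  assumes "in_family C A L \<alpha> p r M u D"
  shows "inj_on (\<lambda>c. \<bar>A c\<bar>) {1..C}"
proof (rule linorder_inj_onI')
  fix c c' assume "c \<in> {1..C}" "c' \<in> {1..C}" "c < c'"
  moreover have "\<forall>c\<in>{1..<C}. A (Suc c) < A c"
    using assms by (simp add: in_family_def)
  ultimately have "A c' < A c"
    by (intro decreasing_amplitudes_less[of C A]) simp_all
  moreover have "A c' > 0" using in_family_amplitude_pos[OF assms \<open>c' \<in> {1..C}\<close>] .
  ultimately show "\<bar>A c\<bar> \<noteq> \<bar>A c'\<bar>" by simp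
qed

lemma prod_comp_eq_prod_power_card:
  assumes "finite S" "finite T" "g ` S \<subseteq> T"
  shows "(\<Prod>x\<in>S. h (g x)) = (\<Prod>y\<in>T. h y ^ card {x\<in>S. g x = y})"
proof -
  have "(\<Prod>x\<in>S. h (g x)) = (\<Prod>y\<in>T. \<Prod>x\<in>{x\<in>S. g x = y}. h (g x))"
    using assms by (intro prod.group[symmetric])
  also have "\<dots> = (\<Prod>y\<in>T. h y ^ card {x\<in>S. g x = y})"
    by (intro prod.cong refl) simp
  finally show ?thesis .
qed

lemma card_coords_in_eq_sum_type:
  fixes v :: "complex^'n"
  assumes "finite S"
  shows "real (card {m. v$m \<in> S}) = real CARD('n) * (\<Sum>x\<in>S. type_of_word v x)"
proof -
  have "{m. v$m \<in> S} = (\<Union>x\<in>S. {m. v$m = x})" by auto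
  then have "card {m. v$m \<in> S} = (\<Sum>x\<in>S. card {m. v$m = x})"
    using assms by (simp add: card_UN_disjoint disjoint_iff)
  then show ?thesis by (simp add: type_of_word_def sum_distrib_left)
qed

lemma card_coords_in_layer:
  fixes u :: "nat \<Rightarrow> complex^'n"
  assumes "constant_composition M u" "i \<in> {1..M}" "A c \<noteq> 0" "L c \<ge> 1"
    and "\<forall>l<L c. code_type M u (cpoint A L \<alpha> c l) = p c / real (L c)"
  shows "real (card {m. u i $ m \<in> constellation_layer A L \<alpha> c}) = real CARD('n) * p c"
proof -
  have "(\<Sum>x\<in>constellation_layer A L \<alpha> c. type_of_word (u i) x)
      = (\<Sum>l<L c. type_of_word (u i) (cpoint A L \<alpha> c l))"
    unfolding constellation_layer_def using inj_on_cpoint[of A c L \<alpha>, OF assms(3)] by (simp add: sum.reindex)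
  also have "\<dots> = (\<Sum>l<L c. p c / real (L c))"
    using assms(1,2,5) by (simp add: constant_composition_def)
  also have "\<dots> = p c" using assms(4) by simp
  finally show ?thesis by (simp add: card_coords_in_eq_sum_type constellation_layer_def)
qed

lemma disc_region_eq_cballs:
  assumes inj: "inj_on (\<lambda>c. \<bar>A c\<bar>) {1..C}"
    and layer: "\<And>m. layer m \<in> {1..C}" "\<And>m. v$m \<in> constellation_layer A L \<alpha> (layer m)"
  shows "disc_region C A L \<alpha> r v = {y. \<forall>m. y$m \<in> cball (v$m) (r (layer m))}"
proof -
  have "(\<exists>c\<in>{1..C}. \<exists>l<L c. v$m = cpoint A L \<alpha> c l \<and> cmod (y$m - v$m) \<le> r c)
      \<longleftrightarrow> cmod (y$m - v$m) \<le> r (layer m)" for y m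
  proof
    assume "\<exists>c\<in>{1..C}. \<exists>l<L c. v$m = cpoint A L \<alpha> c l \<and> cmod (y$m - v$m) \<le> r c"
    then obtain c where c: "c \<in> {1..C}" "v$m \<in> constellation_layer A L \<alpha> c" "cmod (y$m - v$m) \<le> r c"
      by (auto simp: constellation_layer_def)
    then have "c = layer m" using constellation_layers_disjoint[OF inj] layer by blast
    with c show "cmod (y$m - v$m) \<le> r (layer m)" by simp
  next
    assume "cmod (y$m - v$m) \<le> r (layer m)"
    then show "\<exists>c\<in>{1..C}. \<exists>l<L c. v$m = cpoint A L \<alpha> c l \<and> cmod (y$m - v$m) \<le> r c"
      using layer[of m] by (auto simp: constellation_layer_def)
  qed
  then show ?thesis by (simp add: disc_region_def dist_norm norm_minus_commute)
qed

lemma success_probability_eq: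
  fixes u :: "nat \<Rightarrow> complex^'n"
  assumes "\<sigma> > 0" and "is_code M (constellation C A L \<alpha>) u D" and "constant_composition M u"
    and family: "in_family C A L \<alpha> p r M u D" and "i \<in> {1..M}"
  shows "(LINT y:D i|lborel. awgn_density \<sigma> (u i) y)
       = (\<Prod>c=1..C. (1 - exp (- (r c)\<^sup>2 / \<sigma>\<^sup>2)) powr (real CARD('n) * p c))"
proof -
  define q where "q c = 1 - exp (- (r c)\<^sup>2 / \<sigma>\<^sup>2)" for c
  have inj: "inj_on (\<lambda>c. \<bar>A c\<bar>) {1..C}" using family by (rule in_family_inj_amplitude)
  have "\<forall>m. \<exists>c\<in>{1..C}. u i $ m \<in> constellation_layer A L \<alpha> c"
    using assms(2,5) by (simp add: is_code_def constellation_eq_UN_layers)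
  then obtain layer where layer: "\<And>m. layer m \<in> {1..C}" "\<And>m. u i $ m \<in> constellation_layer A L \<alpha> (layer m)"
    by metis
  have layer_iff: "layer m = c \<longleftrightarrow> u i $ m \<in> constellation_layer A L \<alpha> c" if "c \<in> {1..C}" for m c
    using layer constellation_layers_disjoint[OF inj] that by metis
  have D_eq: "D i = {y. \<forall>m. y$m \<in> cball (u i $ m) (r (layer m))}"
    using family assms(5) by (simp add: in_family_def disc_region_eq_cballs[OF inj layer])
  have "r (layer m) \<ge> 0" for m
    using family layer(1)[of m] by (simp add: in_family_def less_imp_le)
  then have "(LINT y:D i|lborel. awgn_density \<sigma> (u i) y) = (\<Prod>m\<in>UNIV. q (layer m))"
    unfolding D_eq q_def by (rule integral_awgn_density_cballs[OF assms(1)])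
  also have "\<dots> = (\<Prod>c\<in>{1..C}. q c ^ card {m\<in>UNIV. layer m = c})"
    using layer(1) by (intro prod_comp_eq_prod_power_card) auto
  also have "\<dots> = (\<Prod>c=1..C. q c powr (real CARD('n) * p c))"
  proof (intro prod.cong refl)
    fix c assume c: "c \<in> {1..C}"
    have "r c > 0" using family c by (simp add: in_family_def)
    then have "q c > 0" using assms(1) by (simp add: q_def)
    have "{m\<in>UNIV. layer m = c} = {m. u i $ m \<in> constellation_layer A L \<alpha> c}"
      using layer_iff[OF c] by blast
    moreover have "real (card {m. u i $ m \<in> constellation_layer A L \<alpha> c}) = real CARD('n) * p c"
      using assms(3,5) family c in_family_amplitude_pos[OF family c]
      by (intro card_coords_in_layer) (auto simp: in_family_def)
    ultimately show "q c ^ card {m\<in>UNIV. layer m = c} = q c powr (real CARD('n) * p c)"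
      using \<open>q c > 0\<close> by (metis powr_realpow)
  qed
  finally show ?thesis by (simp add: q_def)
qed

theorem corollary1:
  fixes u :: "nat \<Rightarrow> complex^'n" and D :: "nat \<Rightarrow> (complex^'n) set"
    and M C :: nat and A \<alpha> p r :: "nat \<Rightarrow> real" and L :: "nat \<Rightarrow> nat"
    and \<sigma> \<epsilon> B \<delta> k1 k2 :: real
  assumes "\<sigma> > 0" and "k1 > 0" and "k2 > 0" and "M \<ge> 1"
    and "is_code M (constellation C A L \<alpha>) u D"
    and "avg_error \<sigma> M u D \<le> \<epsilon>"
    and "theta k1 k2 B M u \<le> \<delta>"
    and "constant_composition M u"
    and "in_family C A L \<alpha> p r M u D"
  shows "\<epsilon> \<ge> 1 - (\<Prod>c=1..C. (1 - exp (- (r c)\<^sup>2 / \<sigma>\<^sup>2)) powr (real CARD('n) * p c))"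
proof -
  have "avg_error \<sigma> M u D = 1 - (\<Prod>c=1..C. (1 - exp (- (r c)\<^sup>2 / \<sigma>\<^sup>2)) powr (real CARD('n) * p c))"
    using success_probability_eq[OF assms(1,5,8,9)] assms(4) by (simp add: avg_error_def)
  with assms(6) show ?thesis by simp
qed

end
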